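(* Let $\lambda$ be a partition with $n$ parts and let $\beta \in U_\lambda(n)$. If $\beta \notin UBP_\lambda(n)$, then the terminal pair $(\lambda,\beta)$ is not nonpermutable; i.e. there is a permutation $\pi \neq (1,\dots,n)$ of $[n]$ with $\mathcal{LD}_\lambda(\beta;\pi) \neq \emptyset$.
   Context: Fix an integer $n \geq 1$ and write $[k] = \{1,\dots,k\}$. A partition is $\lambda = (\lambda_1,\dots,\lambda_n)$ with $\lambda_1 \geq \dots \geq \lambda_n \geq 0$ integers. Let $R_\lambda \subseteq [n-1]$ be the set of $q \in [n-1]$ with $\lambda_q > \lambda_{q+1}$; write its elements $q_1 < \dots < q_r$, and set $q_0 := 0$, $q_{r+1} := n$. For $h \in [r+1]$ the $h$-th carrel is the index interval $\{q_{h-1}+1,\dots,q_h\}$. A $\lambda$-tuple is an $n$-tuple $\beta$ with entries in $[n]$, considered with this carrel structure; it is upper if $\beta_i \geq i$ for all $i$. $U_\lambda(n)$ is the set of upper $\lambda$-tuples. Critical indices: for $\beta \in U_\lambda(n)$ and $h \in [r+1]$, set $x_1 := q_h$; given $x_{u-1}$, if some index $x$ with $q_{h-1} < x < x_{u-1}$ satisfies $\beta_{x_{u-1}} - \beta_x > x_{u-1} - x$, let $x_u$ be the largest such $x$, otherwise stop. The $x_u$ are the critical indices of $\beta$ in carrel $h$. For $i \in [n]$ let $x(i)$ be the smallest critical index in the carrel of $i$ with $x(i) \geq i$. The $\lambda$-platform is $\Xi_\lambda(\beta) := \xi$ with $\xi_i := \beta_{x(i)}$. $UBP_\lambda(n)$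 is the set of $\beta \in U_\lambda(n)$ with $\beta_i \leq \Xi_\lambda(\beta)_i$ for all $i$. Lattice paths: lattice points are integer pairs $(a,b)$ with $a \geq 0$, $b \geq 1$. A lattice path is a sequence of lattice points each consecutive step of which is $(a,b) \to (a+1,b)$ (easterly) or $(a,b) \to (a,b+1)$ (southerly). An $n$-path is $(\Lambda_1,\dots,\Lambda_n)$ with $\Lambda_m$ a lattice path starting at $(n-m,m)$. The terminals of $(\lambda,\beta)$ are $P_m := (\lambda_m + n - m, \beta_m)$, $m \in [n]$. For a permutation $\pi$ of $[n]$, $\mathcal{LD}_\lambda(\beta;\pi)$ is the set of $n$-paths with $\Lambda_m$ ending at $P_{\pi_m}$ for every $m$ and with no two distinct components sharing a lattice point. The pair $(\lambda,\beta)$ is nonpermutable if $\mathcal{LD}_\lambda(\beta;\pi) = \emptyset$ for every permutation $\pi \neq (1,\dots,n)$. *)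

theory Defs
  imports "HOL-Combinatorics.Permutations"
begin

text \<open>Indices run over {1..n}; a partition and a tuple are functions nat \<Rightarrow> nat
  of which only the values at 1..n matter.\<close>

definition is_partition :: "nat \<Rightarrow> (nat \<Rightarrow> nat) \<Rightarrow> bool" where
  "is_partition n lam \<longleftrightarrow> (\<forall>i\<in>{1..<n}. lam (Suc i) \<le> lam i)"

definition breaks :: "nat \<Rightarrow> (nat \<Rightarrow> nat) \<Rightarrow> nat set" where
  "breaks n lam = {q \<in> {1..<n}. lam (Suc q) < lam q}"

definition carrel_end :: "nat \<Rightarrow> (nat \<Rightarrow> nat) \<Rightarrow> nat \<Rightarrow> nat" where
  "carrel_end n lam i = (LEAST q. q \<in> breaks n lam \<union> {n} \<and> i \<le> q)"

text \<open>Value q_{h-1} for the carrel {q_{h-1}+1..q_h} containing index i.\<close>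
definition carrel_start :: "nat \<Rightarrow> (nat \<Rightarrow> nat) \<Rightarrow> nat \<Rightarrow> nat" where
  "carrel_start n lam i = (GREATEST q. q \<in> breaks n lam \<union> {0} \<and> q < i)"

definition upper_tuple :: "nat \<Rightarrow> (nat \<Rightarrow> nat) \<Rightarrow> bool" where
  "upper_tuple n beta \<longleftrightarrow> (\<forall>i\<in>{1..n}. beta i \<in> {1..n} \<and> i \<le> beta i)"

definition crit_cond :: "(nat \<Rightarrow> nat) \<Rightarrow> nat \<Rightarrow> nat \<Rightarrow> bool" where
  "crit_cond beta y x \<longleftrightarrow> int (beta y) - int (beta x) > int y - int x"

inductive critical :: "nat \<Rightarrow> (nat \<Rightarrow> nat) \<Rightarrow> (nat \<Rightarrow> nat) \<Rightarrow> nat \<Rightarrow> bool"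
  for n lam beta where
  crit_end: "q \<in> breaks n lam \<union> {n} \<Longrightarrow> critical n lam beta q"
| crit_step: "critical n lam beta y \<Longrightarrow>
    (\<exists>x. carrel_start n lam y < x \<and> x < y \<and> crit_cond beta y x) \<Longrightarrow>
    critical n lam beta (GREATEST x. carrel_start n lam y < x \<and> x < y \<and> crit_cond beta y x)"

definition crit_above :: "nat \<Rightarrow> (nat \<Rightarrow> nat) \<Rightarrow> (nat \<Rightarrow> nat) \<Rightarrow> nat \<Rightarrow> nat" where
  "crit_above n lam beta i =
     (LEAST x. critical n lam beta x \<and> i \<le> x \<and> x \<le> carrel_end n lam i)"

definition platform :: "nat \<Rightarrow> (nat \<Rightarrow> nat) \<Rightarrow> (nat \<Rightarrow> nat) \<Rightarrow> nat \<Rightarrow> nat" where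
  "platform n lam beta i = beta (crit_above n lam beta i)"

definition UBP :: "nat \<Rightarrow> (nat \<Rightarrow> nat) \<Rightarrow> (nat \<Rightarrow> nat) \<Rightarrow> bool" where
  "UBP n lam beta \<longleftrightarrow> upper_tuple n beta \<and>
     (\<forall>i\<in>{1..n}. beta i \<le> platform n lam beta i)"

text \<open>Lattice points (a,b) with a \<ge> 0, b \<ge> 1; paths with easterly/southerly steps.\<close>
definition lattice_path :: "(nat \<times> nat) list \<Rightarrow> bool" where
  "lattice_path ps \<longleftrightarrow> ps \<noteq> [] \<and> (\<forall>p\<in>set ps. 1 \<le> snd p) \<and>
     (\<forall>k. Suc k < length ps \<longrightarrow>
        ps ! Suc k = (Suc (fst (ps ! k)), snd (ps ! k)) \<or>
        ps ! Suc k = (fst (ps ! k), Suc (snd (ps ! k))))"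

definition terminal :: "nat \<Rightarrow> (nat \<Rightarrow> nat) \<Rightarrow> (nat \<Rightarrow> nat) \<Rightarrow> nat \<Rightarrow> nat \<times> nat" where
  "terminal n lam beta m = (lam m + n - m, beta m)"

definition LD :: "nat \<Rightarrow> (nat \<Rightarrow> nat) \<Rightarrow> (nat \<Rightarrow> nat) \<Rightarrow> (nat \<Rightarrow> nat)
                   \<Rightarrow> (nat \<Rightarrow> (nat \<times> nat) list) set" where
  "LD n lam beta \<pi> = {\<Lambda>.
     (\<forall>m. m \<notin> {1..n} \<longrightarrow> \<Lambda> m = []) \<and>
     (\<forall>m\<in>{1..n}. lattice_path (\<Lambda> m) \<and> hd (\<Lambda> m) = (n - m, m) \<and>
                 last (\<Lambda> m) = terminal n lam beta (\<pi> m)) \<and>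
     (\<forall>m\<in>{1..n}. \<forall>m'\<in>{1..n}. m \<noteq> m' \<longrightarrow> set (\<Lambda> m) \<inter> set (\<Lambda> m') = {})}"

definition nonpermutable :: "nat \<Rightarrow> (nat \<Rightarrow> nat) \<Rightarrow> (nat \<Rightarrow> nat) \<Rightarrow> bool" where
  "nonpermutable n lam beta \<longleftrightarrow>
     (\<forall>\<pi>. \<pi> permutes {1..n} \<and> \<pi> \<noteq> id \<longrightarrow> LD n lam beta \<pi> = {})"

end

theory Submission
  imports Defs
begin

text \<open>Suppose \<open>beta i\<close> exceeds the platform value \<open>beta x\<close>, where \<open>x\<close> is the first
  critical index at or above \<open>i\<close>, and let \<open>a\<close> be the last index of \<open>{i..x}\<close> at which
  \<open>beta\<close> is maximal; then \<open>a < x\<close> and \<open>beta\<close> drops strictly after \<open>a\<close>. As \<open>x\<close> is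
  critical, \<open>beta k - k > beta x - x\<close> for every later index \<open>k\<close> of its carrel. Inside the
  carrel all \<open>lam k\<close> agree, and these two facts leave enough room to route the paths
  nonintersectingly along the cycle \<open>a \<mapsto> a + 1 \<mapsto> \<dots> \<mapsto> x \<mapsto> a\<close>.

  Paths are described antidiagonal by antidiagonal: a path meets the antidiagonal
  \<open>u = column + row\<close> in exactly one point, given by its row, and two such paths are disjoint
  as soon as their rows differ on every antidiagonal they share.\<close>

section \<open>Lattice paths along antidiagonals\<close>

definition diag_path :: "(nat \<Rightarrow> nat) \<Rightarrow> nat \<Rightarrow> nat \<Rightarrow> (nat \<times> nat) list" where
  "diag_path h s e = map (\<lambda>u. (u - h u, h u)) [s..<Suc e]"

lemma diag_path_nth: "k < Suc e - s \<Longrightarrow> diag_path h s e ! k = (s + k - h (s + k), h (s + k))"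
  by (simp add: diag_path_def del: upt_Suc)

lemma length_diag_path: "length (diag_path h s e) = Suc e - s"
  by (simp add: diag_path_def del: upt_Suc)

lemma set_diag_path: "set (diag_path h s e) = (\<lambda>u. (u - h u, h u)) ` {s..e}"
  by (auto simp: diag_path_def atLeastLessThanSuc_atLeastAtMost)

lemma hd_diag_path: "s \<le> e \<Longrightarrow> hd (diag_path h s e) = (s - h s, h s)"
  by (simp add: diag_path_def hd_map del: upt_Suc)

lemma last_diag_path: "s \<le> e \<Longrightarrow> last (diag_path h s e) = (e - h e, h e)"
  by (simp add: diag_path_def last_map del: upt_Suc)

lemma lattice_path_diag_path:
  assumes "s \<le> e"
    and step: "\<And>u. s \<le> u \<Longrightarrow> u < e \<Longrightarrow> h (Suc u) = h u \<or> h (Suc u) = Suc (h u)"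
    and bounds: "\<And>u. s \<le> u \<Longrightarrow> u \<le> e \<Longrightarrow> 1 \<le> h u \<and> h u \<le> u"
  shows "lattice_path (diag_path h s e)"
proof -
  have "diag_path h s e ! Suc k = (Suc (fst (diag_path h s e ! k)), snd (diag_path h s e ! k)) \<or>
        diag_path h s e ! Suc k = (fst (diag_path h s e ! k), Suc (snd (diag_path h s e ! k)))"
    if "Suc k < length (diag_path h s e)" for k
  proof -
    have k: "Suc k < Suc e - s" using that by (simp add: length_diag_path)
    then have "h (Suc (s + k)) = h (s + k) \<or> h (Suc (s + k)) = Suc (h (s + k))" "h (s + k) \<le> s + k"
      using step bounds by auto
    with k show ?thesis by (auto simp: diag_path_nth)
  qed
  moreover have "diag_path h s e \<noteq> []" using \<open>s \<le> e\<close> by (simp add: diag_path_def del: upt_Suc)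
  moreover have "\<forall>p\<in>set (diag_path h s e). 1 \<le> snd p" using bounds by (auto simp: set_diag_path)
  ultimately show ?thesis unfolding lattice_path_def by blast
qed

lemma diag_paths_disjoint:
  assumes "\<And>u. s \<le> u \<Longrightarrow> u \<le> e \<Longrightarrow> s' \<le> u \<Longrightarrow> u \<le> e' \<Longrightarrow> h u \<noteq> h' u"
    and "\<And>u. s \<le> u \<Longrightarrow> u \<le> e \<Longrightarrow> h u \<le> u"
    and "\<And>u. s' \<le> u \<Longrightarrow> u \<le> e' \<Longrightarrow> h' u \<le> u"
  shows "set (diag_path h s e) \<inter> set (diag_path h' s' e') = {}"
proof -
  have False if u: "u \<in> {s..e}" and v: "v \<in> {s'..e'}" and eq: "(u - h u, h u) = (v - h' v, h' v)" for u v
  proof -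
    have "h u \<le> u" "h' v \<le> v" using u v assms(2,3) by auto
    with eq have "u = v" by auto
    with u v eq assms(1) show False by auto
  qed
  then show ?thesis unfolding set_diag_path by fastforce
qed

lemma diag_paths_in_LD:
  fixes H :: "nat \<Rightarrow> nat \<Rightarrow> nat" and E :: "nat \<Rightarrow> nat"
  assumes start: "\<And>m. m \<in> {1..n} \<Longrightarrow> n \<le> E m \<and> H m n = m"
    and bounds: "\<And>m u. m \<in> {1..n} \<Longrightarrow> n \<le> u \<Longrightarrow> 1 \<le> H m u \<and> H m u \<le> u"
    and step: "\<And>m u. H m (Suc u) = H m u \<or> H m (Suc u) = Suc (H m u)"
    and final: "\<And>m. m \<in> {1..n} \<Longrightarrow> (E m - H m (E m), H m (E m)) = terminal n lam beta (\<pi> m)"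
    and strict: "\<And>m m' u. 1 \<le> m \<Longrightarrow> m < m' \<Longrightarrow> m' \<le> n \<Longrightarrow> n \<le> u \<Longrightarrow>
                   u \<le> E m \<Longrightarrow> u \<le> E m' \<Longrightarrow> H m u < H m' u"
  shows "(\<lambda>m. if m \<in> {1..n} then diag_path (H m) n (E m) else []) \<in> LD n lam beta \<pi>"
  unfolding LD_def
proof (intro CollectI conjI allI impI ballI)
  fix m assume m: "m \<in> {1..n}"
  then show "lattice_path (if m \<in> {1..n} then diag_path (H m) n (E m) else [])"
    using start[OF m] bounds[OF m] step by (auto intro!: lattice_path_diag_path)
  show "hd (if m \<in> {1..n} then diag_path (H m) n (E m) else []) = (n - m, m)"
    using m start by (simp add: hd_diag_path)
  show "last (if m \<in> {1..n} then diag_path (H m) n (E m) else []) = terminal n lam beta (\<pi> m)"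
    using m start final by (simp add: last_diag_path)
next
  fix m m' assume m: "m \<in> {1..n}" and m': "m' \<in> {1..n}" and "m \<noteq> m'"
  then have "set (diag_path (H m) n (E m)) \<inter> set (diag_path (H m') n (E m')) = {}"
    using strict[of m m'] strict[of m' m] bounds[OF m] bounds[OF m']
    by (intro diag_paths_disjoint) (auto simp: nat_neq_iff)
  with m m' show "set (if m \<in> {1..n} then diag_path (H m) n (E m) else []) \<inter>
             set (if m' \<in> {1..n} then diag_path (H m') n (E m') else []) = {}"
    by simp
qed auto

lemma upper_tupleD: "upper_tuple n beta \<Longrightarrow> 1 \<le> k \<Longrightarrow> k \<le> n \<Longrightarrow> k \<le> beta k \<and> beta k \<le> n"
  unfolding upper_tuple_def by auto

section \<open>Rerouting a block of paths along a cycle\<close>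

locale cycle_config =
  fixes n L a b q :: nat and lam beta :: "nat \<Rightarrow> nat"
  assumes a_pos: "1 \<le> a" and a_less_b: "a < b" and b_le_q: "b \<le> q" and q_le_n: "q \<le> n"
    and L_pos: "1 \<le> L"
    and lam_antimono: "\<And>k k'. 1 \<le> k \<Longrightarrow> k \<le> k' \<Longrightarrow> k' \<le> n \<Longrightarrow> lam k' \<le> lam k"
    and lam_block: "\<And>k. a \<le> k \<Longrightarrow> k \<le> q \<Longrightarrow> lam k = L"
    and lam_after: "\<And>k. q < k \<Longrightarrow> k \<le> n \<Longrightarrow> lam k < L"
    and upper: "upper_tuple n beta"
    and beta_less_beta_a: "\<And>k. a < k \<Longrightarrow> k \<le> b \<Longrightarrow> beta k < beta a"
    and slope_b_less: "\<And>k. b < k \<Longrightarrow> k \<le> q \<Longrightarrow> beta b + k < beta k + b"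
begin

text \<open>Outside \<open>{a..q}\<close>, path \<open>m\<close> is the usual east-then-south path to \<open>P\<^sub>m\<close>. The
  paths \<open>a \<le> m \<le> q\<close> all turn south on the antidiagonal \<open>turn\<close>, one column short of
  their own terminal; for \<open>m < b\<close> this is the column of \<open>P\<^sub>m\<^sub>+\<^sub>1\<close>, where path \<open>m\<close> ends.
  Path \<open>b\<close> descends to just below \<open>P\<^sub>b\<close>, steps east (the jog), descends to row
  \<open>beta a\<close> and runs east to \<open>P\<^sub>a\<close>, passing below the terminals of the cycle paths. The
  paths \<open>b < m \<le> q\<close> jog on the same antidiagonal, which keeps them clear of path \<open>b\<close>;
  the slope condition puts their jog above their own terminals.\<close>

definition turn :: nat where "turn = n + L - 1"

definition jog :: nat where "jog = beta b - b + 2"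

definition jogged :: "nat \<Rightarrow> nat \<Rightarrow> nat" where
  "jogged k u = k + (u - turn) - (if jog \<le> u - turn then 1 else 0)"

definition height :: "nat \<Rightarrow> nat \<Rightarrow> nat" where
  "height m u = (if a \<le> m \<and> m < b then m + (u - turn)
      else if m = b then min (beta a) (jogged b u)
      else if b < m \<and> m \<le> q then jogged m u
      else m + (u - (n + lam m)))"

definition last_diag :: "nat \<Rightarrow> nat" where
  "last_diag m = (if a \<le> m \<and> m < b then n + L + beta (Suc m) - Suc m
      else if m = b then n + L + beta a - a
      else n + lam m + beta m - m)"

definition cyc :: "nat \<Rightarrow> nat" where
  "cyc m = (if a \<le> m \<and> m < b then Suc m else if m = b then a else m)"

lemma index_cases:
  obtains (before) "m < a" | (cycle) "a \<le> m" "m < b" | (pivot) "m = b"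
    | (slope) "b < m" "m \<le> q" | (after) "q < m"
  by linarith

lemma beta_bounds: "1 \<le> k \<Longrightarrow> k \<le> n \<Longrightarrow> k \<le> beta k \<and> beta k \<le> n"
  using upper by (rule upper_tupleD)

lemma beta_a_bounds: "a \<le> beta a" "beta a \<le> n" "b \<le> beta b" "beta b < beta a"
  using beta_bounds[of a] beta_bounds[of b] beta_less_beta_a[of b] a_pos a_less_b b_le_q q_le_n
  by auto

lemma lam_before: "1 \<le> k \<Longrightarrow> k < a \<Longrightarrow> L \<le> lam k"
  using lam_antimono[of k a] lam_block[of a] a_less_b b_le_q q_le_n by simp

lemma turn_eq: "turn + 1 = n + L"
  using L_pos by (simp add: turn_def)

lemma
  shows height_outer: "m < a \<or> q < m \<Longrightarrow> height m u = m + (u - (n + lam m))"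
    and last_diag_outer: "m < a \<or> q < m \<Longrightarrow> last_diag m = n + lam m + beta m - m"
    and height_cycle: "a \<le> m \<Longrightarrow> m < b \<Longrightarrow> height m u = m + (u - turn)"
    and last_diag_cycle: "a \<le> m \<Longrightarrow> m < b \<Longrightarrow> last_diag m = n + L + beta (Suc m) - Suc m"
    and height_pivot: "height b u = min (beta a) (jogged b u)"
    and last_diag_pivot: "last_diag b = n + L + beta a - a"
    and height_slope: "b < m \<Longrightarrow> m \<le> q \<Longrightarrow> height m u = jogged m u"
    and last_diag_slope: "b < m \<Longrightarrow> m \<le> q \<Longrightarrow> last_diag m = n + L + beta m - m"
  using a_less_b b_le_q lam_block[of m] by (auto simp: height_def last_diag_def)

lemma jogged_Suc: "jogged k (Suc u) = jogged k u \<or> jogged k (Suc u) = Suc (jogged k u)"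
  by (simp add: jogged_def; arith)

lemma jogged_le: "jogged k u \<le> k + (u - turn)"
  by (simp add: jogged_def)

lemma jogged_ge: "k + (u - turn) \<le> jogged k u + 1"
  by (simp add: jogged_def; arith)

lemma jogged_ge_outer: "k + (u - (n + L)) \<le> jogged k u"
  using turn_eq by (simp add: jogged_def jog_def; arith)

lemma jogged_strict_mono: "k < k' \<Longrightarrow> jogged k u < jogged k' u"
  by (simp add: jogged_def jog_def; arith)

lemma jogged_before_jog: "u - turn < jog \<Longrightarrow> jogged k u = k + (u - turn)"
  by (simp add: jogged_def)

lemma jogged_after_jog: "jog \<le> u - turn \<Longrightarrow> jogged k u + 1 = k + (u - turn)"
  by (simp add: jogged_def jog_def; arith)

lemma start_le_last_diag:
  assumes "1 \<le> m" "m \<le> n"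
  shows "n \<le> last_diag m"
proof (cases m rule: index_cases)
  case cycle then show ?thesis
    using beta_bounds[of "Suc m"] b_le_q q_le_n by (simp add: last_diag_cycle; arith)
next
  case pivot then show ?thesis using beta_a_bounds by (simp add: last_diag_pivot; arith)
next
  case slope then show ?thesis using beta_bounds[of m] assms by (simp add: last_diag_slope; arith)
qed (use beta_bounds[of m] assms in \<open>auto simp: last_diag_outer\<close>)

lemma height_start:
  assumes "1 \<le> m"
  shows "height m n = m"
proof (cases m rule: index_cases)
  case cycle then show ?thesis using L_pos by (simp add: height_cycle turn_def)
next
  case pivot then show ?thesis
    using a_less_b beta_a_bounds L_pos by (simp add: height_pivot jogged_def turn_def jog_def)
next
  case slope then show ?thesis using L_pos by (simp add: height_slope jogged_def turn_def jog_def)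
qed (simp_all add: height_outer)

lemma height_bounds:
  assumes "1 \<le> m" "m \<le> n" "n \<le> u"
  shows "1 \<le> height m u \<and> height m u \<le> u"
proof (cases m rule: index_cases)
  case cycle then show ?thesis using L_pos assms by (simp add: height_cycle turn_def; arith)
next
  case pivot
  have "1 \<le> jogged b u \<and> jogged b u \<le> u"
    using assms pivot L_pos by (simp add: jogged_def turn_def jog_def; arith)
  then show ?thesis using pivot beta_a_bounds a_pos by (auto simp: height_pivot min_def)
next
  case slope then show ?thesis
    using L_pos assms by (simp add: height_slope jogged_def turn_def jog_def; arith)
qed (use assms in \<open>auto simp: height_outer\<close>)

lemma height_Suc: "height m (Suc u) = height m u \<or> height m (Suc u) = Suc (height m u)"
proof (cases m rule: index_cases)
  case cycle then show ?thesis by (simp add: height_cycle; arith)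
next
  case pivot then show ?thesis using jogged_Suc[of b u] by (auto simp: height_pivot min_def)
next
  case slope then show ?thesis using jogged_Suc[of m u] by (simp add: height_slope)
next
  case before then show ?thesis by (simp add: height_outer; arith)
next
  case after then show ?thesis by (simp add: height_outer; arith)
qed

lemma height_last_diag:
  assumes "1 \<le> m" "m \<le> n"
  shows "(last_diag m - height m (last_diag m), height m (last_diag m)) = terminal n lam beta (cyc m)"
proof (cases m rule: index_cases)
  case before
  then show ?thesis using beta_bounds[of m] assms a_less_b
    by (simp add: height_outer last_diag_outer cyc_def terminal_def; arith)
next
  case cycle
  have "lam (Suc m) = L" "Suc m \<le> beta (Suc m)"
    using cycle b_le_q q_le_n lam_block[of "Suc m"] beta_bounds[of "Suc m"] by auto
  with cycle show ?thesis using L_pos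
    by (simp add: height_cycle last_diag_cycle cyc_def terminal_def turn_def; arith)
next
  case pivot
  have diag: "last_diag b - turn = beta a - a + 1"
    using beta_a_bounds L_pos by (simp add: last_diag_pivot turn_def; arith)
  then have "jog \<le> last_diag b - turn"
    using a_less_b beta_a_bounds by (simp add: jog_def; arith)
  then have "height b (last_diag b) = beta a"
    using diag a_less_b beta_a_bounds by (simp add: height_pivot jogged_def; arith)
  moreover have "lam a = L" using a_less_b b_le_q by (intro lam_block) auto
  ultimately show ?thesis
    using pivot a_less_b beta_a_bounds by (simp add: last_diag_pivot cyc_def terminal_def; arith)
next
  case slope
  have above: "beta b + m < beta m + b" using slope_b_less slope by simp
  then have "m \<le> beta m" using beta_a_bounds by simp
  moreover have "lam m = L" using slope a_less_b by (intro lam_block) auto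
  moreover have diag: "last_diag m - turn = beta m - m + 1"
    using slope \<open>m \<le> beta m\<close> L_pos by (simp add: last_diag_slope turn_def; arith)
  moreover have "jog \<le> last_diag m - turn"
    using diag above beta_a_bounds \<open>m \<le> beta m\<close> by (simp add: jog_def; arith)
  ultimately show ?thesis using slope a_less_b
    by (simp add: height_slope last_diag_slope jogged_def cyc_def terminal_def; arith)
next
  case after
  then show ?thesis using beta_bounds[of m] assms a_less_b b_le_q
    by (simp add: height_outer last_diag_outer cyc_def terminal_def; arith)
qed

lemma height_less_before:
  assumes m: "1 \<le> m" "m < a" and m': "m < m'" "m' \<le> n" and u: "u \<le> last_diag m'"
  shows "height m u < height m' u"
proof -
  have "lam m' \<le> lam m" "L \<le> lam m" using lam_antimono lam_before m m' by auto
  then have below: "height m u \<le> m + (u - (n + L))" using m by (simp add: height_outer; arith)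
  show ?thesis
  proof (cases m' rule: index_cases)
    case before then show ?thesis
      using \<open>lam m' \<le> lam m\<close> m m' by (simp add: height_outer; arith)
  next
    case cycle then show ?thesis using below turn_eq m by (simp add: height_cycle; arith)
  next
    case pivot
    have "height m u < beta a"
      using below u m pivot beta_a_bounds by (simp add: last_diag_pivot; arith)
    moreover have "height m u < jogged b u" using below jogged_ge_outer[of b u] m pivot a_less_b by simp
    ultimately show ?thesis by (simp add: pivot height_pivot)
  next
    case slope then show ?thesis using below jogged_ge_outer[of m' u] m' by (simp add: height_slope)
  next
    case after then show ?thesis
      using \<open>lam m' \<le> lam m\<close> m m' by (simp add: height_outer; arith)
  qed
qed

lemma height_less_cycle:
  assumes m: "a \<le> m" "m < b" and m': "m < m'" "m' \<le> n" and u: "u \<le> last_diag m"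
  shows "height m u < height m' u"
proof (cases m' rule: index_cases)
  case cycle then show ?thesis using m m' by (simp add: height_cycle)
next
  case pivot
  have "Suc m \<le> beta (Suc m)" using beta_bounds[of "Suc m"] m b_le_q q_le_n a_pos by simp
  then have diag: "u - turn \<le> beta (Suc m) - m" using u m turn_eq by (simp add: last_diag_cycle; arith)
  have "beta (Suc m) < beta a" using beta_less_beta_a[of "Suc m"] m by simp
  then have "m + (u - turn) < beta a" using diag \<open>Suc m \<le> beta (Suc m)\<close> by arith
  moreover have "m + (u - turn) < jogged b u"
  proof (cases "u - turn < jog")
    case True then show ?thesis using jogged_before_jog[of u b] m by simp
  next
    case False
    have "Suc m \<noteq> b"
    proof
      assume "Suc m = b"
      then show False using diag False beta_a_bounds by (simp add: jog_def; arith)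
    qed
    then show ?thesis using jogged_after_jog[of u b] m False by simp
  qed
  ultimately show ?thesis using m pivot by (simp add: height_cycle height_pivot)
next
  case slope then show ?thesis
    using jogged_ge[of m' u] m by (simp add: height_cycle height_slope; arith)
next
  case after
  then have "lam m' < L" using lam_after m' by simp
  then show ?thesis using m after turn_eq b_le_q by (simp add: height_cycle height_outer; arith)
qed (use m m' in simp)

lemma height_less_pivot:
  assumes m': "b < m'" "m' \<le> n"
  shows "height b u < height m' u"
proof -
  have "height b u \<le> jogged b u" by (simp add: height_pivot)
  show ?thesis
  proof (cases m' rule: index_cases)
    case slope then show ?thesis
      using \<open>height b u \<le> jogged b u\<close> jogged_strict_mono[of b m' u] m' by (simp add: height_slope)
  next
    case after
    then have "lam m' < L" using lam_after m' by simp
    then show ?thesis using \<open>height b u \<le> jogged b u\<close> jogged_le[of b u] after turn_eq b_le_q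
      by (simp add: height_outer; arith)
  qed (use m' a_less_b b_le_q in simp_all)
qed

lemma height_less_slope:
  assumes m: "b < m" "m \<le> q" and m': "m < m'" "m' \<le> n"
  shows "height m u < height m' u"
proof (cases m' rule: index_cases)
  case slope then show ?thesis using jogged_strict_mono[of m m' u] m m' by (simp add: height_slope)
next
  case after
  then have "lam m' < L" using lam_after m' by simp
  then show ?thesis using jogged_le[of m u] m after turn_eq by (simp add: height_slope height_outer; arith)
qed (use m m' a_less_b in simp_all)

lemma height_less_after:
  assumes m: "q < m" and m': "m < m'" "m' \<le> n"
  shows "height m u < height m' u"
proof -
  have "lam m' \<le> lam m" using lam_antimono m m' a_pos a_less_b b_le_q by simp
  then show ?thesis using m m' by (simp add: height_outer; arith)
qed

lemma height_strict_mono: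
  assumes "1 \<le> m" "m < m'" "m' \<le> n" "u \<le> last_diag m" "u \<le> last_diag m'"
  shows "height m u < height m' u"
proof (cases m rule: index_cases)
  case before then show ?thesis using height_less_before assms by blast
next
  case cycle then show ?thesis using height_less_cycle assms by blast
next
  case pivot then show ?thesis using height_less_pivot assms by blast
next
  case slope then show ?thesis using height_less_slope assms by blast
next
  case after then show ?thesis using height_less_after assms by blast
qed

lemma cyc_permutes: "cyc permutes {1..n}"
proof (rule inj_imp_permutes)
  show "inj_on cyc {1..n}" using a_less_b by (auto simp: inj_on_def cyc_def split: if_splits)
  show "cyc k \<in> {1..n}" if "k \<in> {1..n}" for k
    using that a_less_b b_le_q q_le_n a_pos by (auto simp: cyc_def)
  show "cyc k = k" if "k \<notin> {1..n}" for k
    using that a_less_b b_le_q q_le_n a_pos by (auto simp: cyc_def)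
qed simp

lemma cyc_ne_id: "cyc \<noteq> id"
proof
  assume "cyc = id"
  then have "cyc a = a" by simp
  then show False using a_less_b by (simp add: cyc_def)
qed

lemma LD_cyc_nonempty: "LD n lam beta cyc \<noteq> {}"
proof -
  have "(\<lambda>m. if m \<in> {1..n} then diag_path (height m) n (last_diag m) else []) \<in> LD n lam beta cyc"
    using start_le_last_diag height_start height_bounds height_Suc height_last_diag height_strict_mono
    by (intro diag_paths_in_LD) auto
  then show ?thesis by blast
qed

lemma not_nonpermutable: "\<not> nonpermutable n lam beta"
  unfolding nonpermutable_def using cyc_permutes cyc_ne_id LD_cyc_nonempty by blast

end

section \<open>Carrels, critical indices and platforms\<close>

lemma carrel_end_le: "q \<in> breaks n lam \<union> {n} \<Longrightarrow> i \<le> q \<Longrightarrow> carrel_end n lam i \<le> q"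
  unfolding carrel_end_def by (rule Least_le) simp

lemma carrel_end_mem:
  assumes "i \<le> n"
  shows "carrel_end n lam i \<in> breaks n lam \<union> {n}" and "i \<le> carrel_end n lam i"
  using LeastI[of "\<lambda>q. q \<in> breaks n lam \<union> {n} \<and> i \<le> q" n] assms
  unfolding carrel_end_def by auto

lemma carrel_end_le_n: "i \<le> n \<Longrightarrow> carrel_end n lam i \<le> n"
  by (rule carrel_end_le) auto

lemma is_partition_antimono:
  assumes "is_partition n lam" "1 \<le> k" "k \<le> k'" "k' \<le> n"
  shows "lam k' \<le> lam k"
  using assms(3,4)
proof (induction k' rule: dec_induct)
  case (step m)
  then have "lam (Suc m) \<le> lam m"
    using assms(1,2) unfolding is_partition_def by simp
  with step show ?case by simp
qed simp

lemma lam_eq_on_carrel: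
  assumes "is_partition n lam" "1 \<le> i" "i \<le> n" "i \<le> k" "k \<le> carrel_end n lam i"
  shows "lam k = lam i"
  using assms(4,5)
proof (induction k rule: dec_induct)
  case (step k)
  have "k \<in> {1..<n}" using step assms(2) carrel_end_le_n[OF assms(3), of lam] by simp
  moreover have "k \<notin> breaks n lam" using carrel_end_le[of k n lam i] step by auto
  ultimately have "lam (Suc k) \<le> lam k" "\<not> lam (Suc k) < lam k"
    using assms(1) unfolding breaks_def is_partition_def by auto
  then have "lam (Suc k) = lam k" by simp
  with step show ?case by simp
qed simp

lemma lam_less_after_carrel:
  assumes "is_partition n lam" "1 \<le> i" "i \<le> n" "carrel_end n lam i < k" "k \<le> n"
  shows "lam k < lam i"
proof -
  let ?q = "carrel_end n lam i"
  have "?q \<in> breaks n lam" "i \<le> ?q" using carrel_end_mem[OF assms(3), of lam] assms(4,5) by auto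
  then have "lam (Suc ?q) < lam i"
    using lam_eq_on_carrel[of n lam i ?q] assms(1-3) unfolding breaks_def by simp
  moreover have "lam k \<le> lam (Suc ?q)"
    using is_partition_antimono[of n lam "Suc ?q" k] assms by simp
  ultimately show ?thesis by simp
qed

lemma critical_le: "critical n lam beta y \<Longrightarrow> y \<le> n"
proof (induction rule: critical.induct)
  case (crit_step y)
  let ?P = "\<lambda>x. carrel_start n lam y < x \<and> x < y \<and> crit_cond beta y x"
  obtain x0 where "?P x0" using crit_step.hyps(2) by blast
  then have "?P (Greatest ?P)" by (rule GreatestI_nat[where b=y]) simp
  with crit_step.IH show ?case by simp
qed (auto simp: breaks_def)

text \<open>A critical index strictly undercuts every later index of its carrel in \<open>beta k - k\<close>:
  the next critical index below \<open>y\<close> undercuts \<open>y\<close> by \<open>crit_cond\<close>, and by maximality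
  every index between them is undercut by \<open>y\<close>.\<close>

lemma critical_slope_less:
  assumes "critical n lam beta y" "i \<le> y" "y < k" "k \<le> carrel_end n lam i"
  shows "int (beta y) - int y < int (beta k) - int k"
  using assms
proof (induction arbitrary: k rule: critical.induct)
  case (crit_end q)
  then show ?case using carrel_end_le[of q n lam i] by simp
next
  case (crit_step y)
  let ?q = "carrel_end n lam i"
  let ?P = "\<lambda>x. carrel_start n lam y < x \<and> x < y \<and> crit_cond beta y x"
  define x where "x = Greatest ?P"
  obtain x0 where "?P x0" using crit_step.hyps(2) by blast
  then have Px: "?P x" unfolding x_def by (rule GreatestI_nat[where b=y]) simp
  have x_max: "z \<le> x" if "?P z" for z
    unfolding x_def using that by (auto intro: Greatest_le_nat[where b=y])
  have "y \<le> n" using crit_step.hyps(1) by (rule critical_le)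
  have "y \<le> ?q"
  proof (rule ccontr)
    assume "\<not> y \<le> ?q"
    then have "?q \<in> breaks n lam" "?q < y"
      using carrel_end_mem[of i n lam] \<open>y \<le> n\<close> crit_step.prems by auto
    then have "?q \<le> carrel_start n lam y"
      unfolding carrel_start_def by (auto intro: Greatest_le_nat[where b=y])
    then show False using Px crit_step.prems unfolding x_def by simp
  qed
  have undercut: "int (beta y) - int (beta x) > int y - int x" using Px by (simp add: crit_cond_def)
  consider "k < y" | "k = y" | "y < k" by linarith
  then show ?case
  proof cases
    case 1
    then have "\<not> crit_cond beta y k" using x_max[of k] Px crit_step.prems unfolding x_def by auto
    then show ?thesis using undercut by (simp add: crit_cond_def x_def)
  next
    case 2 then show ?thesis using undercut by (simp add: x_def)
  next
    case 3
    then show ?thesis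
      using crit_step.IH[of k] crit_step.prems undercut Px \<open>y \<le> ?q\<close> by (simp add: x_def)
  qed
qed

lemma crit_above_mem:
  assumes "i \<le> n"
  shows "critical n lam beta (crit_above n lam beta i)"
    and "i \<le> crit_above n lam beta i" and "crit_above n lam beta i \<le> carrel_end n lam i"
  using LeastI[of "\<lambda>x. critical n lam beta x \<and> i \<le> x \<and> x \<le> carrel_end n lam i"
      "carrel_end n lam i"] carrel_end_mem[OF assms, of lam] critical.crit_end[of _ n lam beta]
  unfolding crit_above_def by auto

lemma platform_last_carrel:
  assumes "upper_tuple n beta" "1 \<le> i" "i \<le> n" "carrel_end n lam i = n"
  shows "platform n lam beta i = n"
proof -
  let ?x = "crit_above n lam beta i"
  have x: "critical n lam beta ?x" "i \<le> ?x" "?x \<le> n" using crit_above_mem[of i n lam beta] assms by auto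
  have "?x = n"
  proof (rule ccontr)
    assume "?x \<noteq> n"
    then have "int (beta ?x) - int ?x < int (beta n) - int n"
      using critical_slope_less[OF x(1,2)] x(3) assms(4) by simp
    moreover have "?x \<le> beta ?x" "beta n \<le> n" using upper_tupleD[OF assms(1)] x assms by auto
    ultimately show False by linarith
  qed
  then show ?thesis using upper_tupleD[OF assms(1), of n] assms by (simp add: platform_def)
qed

lemma exists_last_maximum:
  fixes f :: "nat \<Rightarrow> 'a :: linorder"
  assumes "i \<le> x"
  obtains a where "i \<le> a" "a \<le> x" "f i \<le> f a" "\<And>k. a < k \<Longrightarrow> k \<le> x \<Longrightarrow> f k < f a"
proof -
  define A where "A = {a \<in> {i..x}. \<forall>k\<in>{i..x}. f k \<le> f a}"
  have "Max (f ` {i..x}) \<in> f ` {i..x}" using assms by (intro Max_in) auto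
  then obtain a0 where "a0 \<in> {i..x}" "f a0 = Max (f ` {i..x})" by auto
  then have "a0 \<in> A" unfolding A_def by simp
  then have "A \<noteq> {}" by blast
  moreover have "finite A" unfolding A_def by simp
  ultimately have a: "Max A \<in> A" and a_max: "\<And>k. k \<in> A \<Longrightarrow> k \<le> Max A" by auto
  show ?thesis
  proof (rule that)
    show "i \<le> Max A" "Max A \<le> x" "f i \<le> f (Max A)" using a assms unfolding A_def by auto
    fix k assume k: "Max A < k" "k \<le> x"
    then have "k \<notin> A" using a_max by force
    then obtain j where "j \<in> {i..x}" "f k < f j" using k a unfolding A_def by auto
    then show "f k < f (Max A)" using a unfolding A_def by (auto intro: order.strict_trans2)
  qed
qed

lemma cycle_config_in_carrel:
  assumes part: "is_partition n lam" and upper: "upper_tuple n beta"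
    and i: "1 \<le> i" "i \<le> n" and L: "1 \<le> lam i"
    and a: "i \<le> a" "a < x" and x: "critical n lam beta x" "x \<le> carrel_end n lam i"
    and a_max: "\<And>k. a < k \<Longrightarrow> k \<le> x \<Longrightarrow> beta k < beta a"
  shows "cycle_config n (lam i) a x (carrel_end n lam i) lam beta"
proof
  show "carrel_end n lam i \<le> n" using i(2) by (rule carrel_end_le_n)
  show "lam k' \<le> lam k" if "1 \<le> k" "k \<le> k'" "k' \<le> n" for k k'
    using part that by (rule is_partition_antimono)
  show "lam k = lam i" if "a \<le> k" "k \<le> carrel_end n lam i" for k
    using part i _ that(2) by (rule lam_eq_on_carrel) (use a that in linarith)
  show "lam k < lam i" if "carrel_end n lam i < k" "k \<le> n" for k
    using part i that by (rule lam_less_after_carrel)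
  show "beta x + k < beta k + x" if "x < k" "k \<le> carrel_end n lam i" for k
  proof -
    have "int (beta x) - int x < int (beta k) - int k"
      using x(1) _ that by (rule critical_slope_less) (use a in linarith)
    then show ?thesis by linarith
  qed
qed (use i L a x(2) upper a_max in simp_all)

theorem lemma6p1:
  fixes n :: nat and lam beta :: "nat \<Rightarrow> nat"
  assumes "1 \<le> n"
    and "is_partition n lam"
    and "upper_tuple n beta"
    and "\<not> UBP n lam beta"
  shows "\<not> nonpermutable n lam beta"
proof -
  obtain i where i: "1 \<le> i" "i \<le> n" and violation: "platform n lam beta i < beta i"
    using assms(3,4) unfolding UBP_def by force
  define x where "x = crit_above n lam beta i"
  have x: "critical n lam beta x" "i \<le> x" "x \<le> carrel_end n lam i"
    using crit_above_mem[OF i(2)] unfolding x_def by auto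
  obtain a where a: "i \<le> a" "a \<le> x" "beta i \<le> beta a"
    and a_max: "\<And>k. a < k \<Longrightarrow> k \<le> x \<Longrightarrow> beta k < beta a"
    using exists_last_maximum[OF x(2), of beta] by blast
  have "a \<noteq> x" using a violation by (auto simp: platform_def x_def)
  have "lam i \<noteq> 0" \<comment> \<open>otherwise \<open>i\<close> lies in the last carrel, whose platform is \<open>n\<close>\<close>
  proof
    assume "lam i = 0"
    then have "carrel_end n lam i = n"
      using lam_less_after_carrel[OF assms(2) i, of n] carrel_end_le_n[OF i(2), of lam] by force
    then show False
      using platform_last_carrel[OF assms(3) i] violation upper_tupleD[OF assms(3) i] by simp
  qed
  then have "cycle_config n (lam i) a x (carrel_end n lam i) lam beta"
    using cycle_config_in_carrel[OF assms(2,3) i] a a_max x \<open>a \<noteq> x\<close> by simp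
  then show ?thesis by (rule cycle_config.not_nonpermutable)
qed

end
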